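(* Let $b=(\mu_1>\dots>\mu_l>0)\in\mathcal{Y}(0)$, $m=\mu_1$, $n=l$, assume $m>n$, and let $(i_{n+1}\ge i_{n+2}\ge\dots\ge i_m)$ be the conjugate partition of $\tilde b=(\mu_1-n,\mu_2-(n-1),\dots,\mu_l-1)$. For $0\le k\le m-n$ define a block $B_k$, a string of $L_k$ equal signs, where $L_k=i_{n+k}-i_{n+k+1}$ for $1\le k\le m-n-1$, $L_{m-n}=i_m$, and $L_0$ is specified below. Then the relevant $i$-signature of $b$ equals the concatenation $B_0B_1\cdots B_{m-n}$, as follows: (1) If $m,n$ are both even, the $0$-signature, and if $m,n$ are both odd, the $1$-signature, is given by $L_0=n+1-i_{n+1}$, with $B_k$ consisting of $+$ signs for $k$ even and $-$ signs for $k$ odd. (2) If $m$ is even and $n$ odd, the $0$-signature, and if $m$ is odd and $n$ even, the $1$-signature, is given by $L_0=n-i_{n+1}$, with $B_k$ consisting of $-$ signs for $k$ even and $+$ signs for $k$ odd. (3) If $m$ is odd and $n$ even, the $0$-signature, and if $m$ is even and $n$ odd, the $1$-signature, is given by $L_0=n+1-i_{n+1}$, with $B_k$ consisting of $+$ signs for $k$ even and $-$ signs for $k$ odd. (4) If $m,n$ are both odd, the $0$-signature, and if $m,n$ are both even, the $1$-signature, is given by $L_0=n-i_{n+1}$, with $B_k$ consisting of $-$ signs for $k$ even and $+$ signs for $k$ odd. (Blocks of length $0$ are empty.)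
   Context: A charged partition of charge $j\in\{0,1\}$ is a partition (possibly empty) whose Young diagram (rows numbered from the top, columns from the left) has the box in row $r$, column $c$ labelled $j-r+c\pmod 2$. $\mathcal{Y}(0)$ is the set of charge-$0$ charged partitions with distinct nonzero parts. A column is $i$-removable if its bottom box is labelled $i$ and removing it leaves a Young diagram; it is $i$-addable if a box labelled $i$ can be added at its bottom leaving a Young diagram. The $i$-signature is the string of signs obtained by scanning the columns from left to right, including the first empty column (column $\mu_1+1$), writing $+$ for each $i$-addable column, $-$ for each $i$-removable column, and nothing otherwise. *)

theory Defs
  imports Main
begin

text \<open>A partition is a list of parts, weakly decreasing, parts positive.
  Rows and columns are numbered from 1. The charged partition of charge j
  labels the box in row r, column c by (j - r + c) mod 2.\<close>

datatype sign = Plus | Minus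

definition box_label :: "nat \<Rightarrow> nat \<Rightarrow> nat \<Rightarrow> int" where
  "box_label j r c = (int j - int r + int c) mod 2"

definition col_height :: "nat list \<Rightarrow> nat \<Rightarrow> nat" where
  "col_height mu c = length (filter (\<lambda>x. c \<le> x) mu)"

definition first_part :: "nat list \<Rightarrow> nat" where
  "first_part mu = (if mu = [] then 0 else hd mu)"

text \<open>Column c is i-removable: its bottom box exists, is labelled i, and removing it
  leaves a Young diagram (the next column is strictly shorter).\<close>
definition removable :: "nat \<Rightarrow> nat \<Rightarrow> nat list \<Rightarrow> nat \<Rightarrow> bool" where
  "removable j i mu c \<longleftrightarrow>
     col_height mu c > 0 \<and> box_label j (col_height mu c) c = int i \<and>
     col_height mu (c + 1) < col_height mu c"

text \<open>Column c is i-addable: the box below its bottom is labelled i and adding it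
  leaves a Young diagram (the previous column is strictly longer, or c = 1).\<close>
definition addable :: "nat \<Rightarrow> nat \<Rightarrow> nat list \<Rightarrow> nat \<Rightarrow> bool" where
  "addable j i mu c \<longleftrightarrow>
     box_label j (col_height mu c + 1) c = int i \<and>
     (c = 1 \<or> col_height mu c < col_height mu (c - 1))"

definition signature :: "nat \<Rightarrow> nat \<Rightarrow> nat list \<Rightarrow> sign list" where
  "signature j i mu =
     concat (map (\<lambda>c. (if addable j i mu c then [Plus] else [])
                     @ (if removable j i mu c then [Minus] else []))
                 [1..<first_part mu + 2])"

text \<open>Y(0): charge-0 charged partitions with distinct nonzero parts
  (the charge 0 is used in the signature below).\<close>
definition Y0 :: "nat list set" where
  "Y0 = {mu. sorted_wrt (>) mu \<and> (\<forall>x\<in>set mu. 0 < x)}"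

definition btilde :: "nat list \<Rightarrow> nat list" where
  "btilde mu = map (\<lambda>j. mu ! j - (length mu - j)) [0..<length mu]"

definition conj_part :: "nat list \<Rightarrow> nat \<Rightarrow> nat" where
  "conj_part lam k = length (filter (\<lambda>x. k \<le> x) lam)"

text \<open>i_p for n+1 \<le> p \<le> m: the conjugate of tilde b indexed as
  (i_{n+1} \<ge> ... \<ge> i_m), i.e. i_{n+k} = (tilde b)'_k.\<close>
definition iconj :: "nat list \<Rightarrow> nat \<Rightarrow> nat" where
  "iconj mu p = conj_part (btilde mu) (p - length mu)"

definition block_len :: "nat list \<Rightarrow> nat \<Rightarrow> nat \<Rightarrow> nat" where
  "block_len mu L0 k =
     (let m = hd mu; n = length mu in
      if k = 0 then L0
      else if k = m - n then iconj mu m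
      else iconj mu (n + k) - iconj mu (n + k + 1))"

definition blocks :: "nat list \<Rightarrow> nat \<Rightarrow> bool \<Rightarrow> sign list" where
  "blocks mu L0 plus_even =
     concat (map (\<lambda>k. replicate (block_len mu L0 k)
                         (if even k = plus_even then Plus else Minus))
                 [0..<hd mu - length mu + 1])"

end

theory Submission
  imports Defs
begin

(* Prepending to a strict partition a part a larger than all others shifts every label of
   the old diagram by one, as if the charge were raised, and contributes exactly one new sign:
   column a becomes removable for the colour of the new corner box and column a + 1 addable
   for the other colour. Hence the i-signature of a strict partition with n parts is one
   initial sign followed by one sign per part, read from the bottom row up, determined by the
   parity of k + mu_k, which is that of n + (mu_k - (n - k)), a part of tilde b. Read from the
   bottom, tilde b is weakly increasing, so equal parts group into blocks of alternating sign
   whose lengths are the multiplicities i_(n+k) - i_(n+k+1). Only the parity of n matters. *)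

lemma box_label_eq_int_iff: "box_label j r c = int i \<longleftrightarrow> (j + r + c) mod 2 = i"
proof -
  have "int j - int r + int c = int (j + r + c) - 2 * int r"
    by simp
  then have "box_label j r c = int (j + r + c) mod 2"
    unfolding box_label_def by (metis mod_mult_self1_is_0 mod_diff_right_eq diff_zero)
  also have "\<dots> = int ((j + r + c) mod 2)"
    by (simp add: zmod_int)
  finally show ?thesis
    by linarith
qed

lemma col_height_Cons:
  "col_height (a # mu) c = (if c \<le> a then Suc (col_height mu c) else col_height mu c)"
  by (simp add: col_height_def)

lemma col_height_eq_0: "\<forall>x\<in>set mu. x < c \<Longrightarrow> col_height mu c = 0"
  by (fastforce simp add: col_height_def filter_empty_conv)

lemma upt_append_upt: "i \<le> j \<Longrightarrow> j \<le> k \<Longrightarrow> [i..<j] @ [j..<k] = [i..<k]"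
  using upt_add_eq_append[of i j "k - j"] by simp

definition column_signs :: "nat \<Rightarrow> nat \<Rightarrow> nat list \<Rightarrow> nat \<Rightarrow> sign list" where
  "column_signs j i mu c =
     (if addable j i mu c then [Plus] else []) @ (if removable j i mu c then [Minus] else [])"

lemma signature_column_signs:
  "signature j i mu = concat (map (column_signs j i mu) [1..<first_part mu + 2])"
  by (simp add: signature_def column_signs_def[abs_def])

lemma column_signs_Cons:
  "c < a \<Longrightarrow> column_signs j i (a # mu) c = column_signs (Suc j) i mu c"
  by (auto simp add: column_signs_def addable_def removable_def col_height_Cons box_label_eq_int_iff)

lemma signature_extend_columns:
  assumes "sorted_wrt (>) mu" and "first_part mu + 2 \<le> U"
  shows "concat (map (column_signs j i mu) [1..<U]) = signature j i mu"
proof -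
  have "column_signs j i mu c = []" if "first_part mu + 2 \<le> c" for c
  proof -
    have "\<forall>x\<in>set mu. x \<le> first_part mu"
      using assms(1) by (cases mu) (auto simp: first_part_def)
    then have "\<forall>x\<in>set mu. x < c" "\<forall>x\<in>set mu. x < c - 1"
      using that by fastforce+
    then show ?thesis
      using that by (simp add: column_signs_def addable_def removable_def col_height_eq_0)
  qed
  moreover have "[1..<U] = [1..<first_part mu + 2] @ [first_part mu + 2..<U]"
    using assms(2) by (intro upt_append_upt[symmetric]) auto
  ultimately show ?thesis
    by (simp add: signature_column_signs del: upt_Suc)
qed

lemma signature_Nil: "signature j i [] = (if j mod 2 = i then [Plus] else [])"
  by (simp add: signature_column_signs column_signs_def first_part_def addable_def
      removable_def col_height_def box_label_eq_int_iff)

lemma signature_Cons: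
  assumes "sorted_wrt (>) (a # mu)" and "a > 0" and "i \<le> 1"
  shows "signature j i (a # mu) =
           signature (Suc j) i mu @ [if (j + a) mod 2 = i then Plus else Minus]"
proof -
  have "\<forall>x\<in>set mu. x < a"
    using assms(1) by simp
  then have low: "col_height mu a = 0" "col_height mu (a + 1) = 0"
    by (auto intro!: col_height_eq_0)
  have fp: "first_part mu + 2 \<le> a + 1"
    using \<open>\<forall>x\<in>set mu. x < a\<close> assms(2) by (cases mu) (auto simp: first_part_def)
  have cols: "[1..<a + 2] = [1..<a] @ [a, a + 1]"
    using assms(2) upt_append_upt[of 1 a "a + 2"] by (simp add: upt_conv_Cons)
  have old: "map (column_signs j i (a # mu)) [1..<a] = map (column_signs (Suc j) i mu) [1..<a]"
    by (simp add: column_signs_Cons)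
  have "(j + 1 + a) mod 2 = i \<longleftrightarrow> (j + a) mod 2 \<noteq> i"
    using assms(3) by presburger
  then have col_a: "column_signs j i (a # mu) a =
      column_signs (Suc j) i mu a @ (if (j + a) mod 2 = i then [] else [Minus])"
    and col_a1: "column_signs j i (a # mu) (Suc a) = (if (j + a) mod 2 = i then [Plus] else [])"
    using low by (simp_all add: column_signs_def addable_def removable_def col_height_Cons
        box_label_eq_int_iff)
  have "signature j i (a # mu) = concat (map (column_signs j i (a # mu)) [1..<a + 2])"
    by (simp add: signature_column_signs first_part_def)
  also have "\<dots> = concat (map (column_signs (Suc j) i mu) [1..<a + 1])
      @ (if (j + a) mod 2 = i then [] else [Minus]) @ (if (j + a) mod 2 = i then [Plus] else [])"
    using assms(2) unfolding cols map_append concat_append old by (simp add: col_a col_a1)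
  also have "concat (map (column_signs (Suc j) i mu) [1..<a + 1]) = signature (Suc j) i mu"
    using assms(1) fp by (intro signature_extend_columns) auto
  finally show ?thesis
    by simp
qed

lemma signature_strict_partition:
  assumes "sorted_wrt (>) mu" and "\<forall>x\<in>set mu. 0 < x" and "i \<le> 1"
  shows "signature j i mu = (if (j + length mu) mod 2 = i then [Plus] else []) @
     rev (map (\<lambda>k. if (j + k + mu ! k) mod 2 = i then Plus else Minus) [0..<length mu])"
  using assms
proof (induction mu arbitrary: j)
  case Nil
  then show ?case
    by (simp add: signature_Nil)
next
  case (Cons a mu)
  then have "signature j i (a # mu) =
      signature (Suc j) i mu @ [if (j + a) mod 2 = i then Plus else Minus]"
    by (intro signature_Cons) auto
  with Cons show ?case
    by (simp add: map_upt_Suc del: upt_Suc)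
qed

lemma sorted_wrt_greater_nth_gap:
  fixes mu :: "nat list"
  assumes "sorted_wrt (>) mu" and "i \<le> j" and "j < length mu"
  shows "mu ! j + (j - i) \<le> mu ! i"
  using assms(2,3)
proof (induction j)
  case 0
  then show ?case
    by simp
next
  case (Suc j)
  show ?case
  proof (cases "i = Suc j")
    case False
    with Suc have "mu ! j + (j - i) \<le> mu ! i"
      by simp
    moreover have "mu ! Suc j < mu ! j"
      using assms(1) Suc.prems sorted_wrt_nth_less by fastforce
    ultimately show ?thesis
      using False Suc.prems by simp
  qed simp
qed

lemma Y0_nth_ge:
  assumes "mu \<in> Y0" and "k < length mu"
  shows "length mu - k \<le> mu ! k"
proof -
  have "0 < mu ! (length mu - 1)"
    using assms by (auto simp: Y0_def)
  moreover have "mu ! (length mu - 1) + (length mu - 1 - k) \<le> mu ! k"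
    using assms by (intro sorted_wrt_greater_nth_gap) (auto simp: Y0_def)
  ultimately show ?thesis
    by linarith
qed

lemma length_btilde [simp]: "length (btilde mu) = length mu"
  by (simp add: btilde_def)

lemma nth_btilde: "k < length mu \<Longrightarrow> btilde mu ! k = mu ! k - (length mu - k)"
  by (simp add: btilde_def)

lemma btilde_nth_antimono:
  assumes "mu \<in> Y0" and "k \<le> l" and "l < length mu"
  shows "btilde mu ! l \<le> btilde mu ! k"
proof -
  have "mu ! l + (l - k) \<le> mu ! k"
    using assms by (intro sorted_wrt_greater_nth_gap) (auto simp: Y0_def)
  then show ?thesis
    using assms Y0_nth_ge[OF assms(1), of l] by (simp add: nth_btilde)
qed

lemma sorted_rev_btilde: "mu \<in> Y0 \<Longrightarrow> sorted (rev (btilde mu))"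
  by (auto simp: sorted_iff_nth_mono rev_nth intro: btilde_nth_antimono)

lemma btilde_le_hd:
  assumes "mu \<in> Y0" and "x \<in> set (btilde mu)"
  shows "x \<le> hd mu - length mu"
proof -
  obtain k where k: "k < length mu" "x = btilde mu ! k"
    using assms(2) by (auto simp: in_set_conv_nth)
  then have "btilde mu ! 0 = hd mu - length mu"
    using nth_btilde[of 0 mu] hd_conv_nth[of mu] by fastforce
  with k show ?thesis
    using btilde_nth_antimono[OF assms(1), of 0 k] by simp
qed

lemma signature_eq_map_btilde:
  assumes "mu \<in> Y0" and "i \<le> 1"
  shows "signature 0 i mu = (if length mu mod 2 = i then [Plus] else []) @
    map (\<lambda>x. if (x + length mu) mod 2 = i then Plus else Minus) (rev (btilde mu))"
proof -
  have "(k + mu ! k) mod 2 = (btilde mu ! k + length mu) mod 2" if "k < length mu" for k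
    using that Y0_nth_ge[OF assms(1) that] by (simp add: nth_btilde add.commute)
  then have "map (\<lambda>k. if (0 + k + mu ! k) mod 2 = i then Plus else Minus) [0..<length mu]
      = map (\<lambda>x. if (x + length mu) mod 2 = i then Plus else Minus) (btilde mu)"
    by (simp add: btilde_def)
  with assms show ?thesis
    by (simp add: signature_strict_partition Y0_def rev_map)
qed

lemma sorted_eq_concat_replicate_count_list:
  fixes xs :: "nat list"
  assumes "sorted xs" and "set xs \<subseteq> {L..<U}"
  shows "xs = concat (map (\<lambda>k. replicate (count_list xs k) k) [L..<U])"
  using assms
proof (induction xs arbitrary: L)
  case Nil
  then show ?case
    by simp
next
  case (Cons a xs)
  let ?blocks = "\<lambda>ys M. concat (map (\<lambda>k. replicate (count_list ys k) k) [M..<U])"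
  have a: "L \<le> a" "a < U"
    using Cons.prems by auto
  have "xs = ?blocks xs a"
    using Cons.prems by (intro Cons.IH) auto
  also have "\<dots> = replicate (count_list xs a) a @ ?blocks xs (Suc a)"
    using a by (simp add: upt_conv_Cons)
  also have "?blocks xs (Suc a) = ?blocks (a # xs) (Suc a)"
    by (intro arg_cong[where f = concat] map_cong) auto
  finally have xs: "a # xs = replicate (count_list (a # xs) a) a @ ?blocks (a # xs) (Suc a)"
    by simp
  have "count_list (a # xs) k = 0" if "k < a" for k
    using Cons.prems that by (auto simp: count_list_0_iff)
  then have "?blocks (a # xs) L = ?blocks (a # xs) a"
    unfolding upt_append_upt[OF a(1) less_imp_le[OF a(2)], symmetric]
    by (simp del: count_list.simps)
  with xs a show ?case
    by (simp add: upt_conv_Cons del: count_list.simps)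
qed

lemma conj_part_eq_count_list_plus: "conj_part xs k = count_list xs k + conj_part xs (Suc k)"
  by (induction xs) (auto simp: conj_part_def)

lemma
  assumes "mu \<in> Y0"
  shows count_list_btilde_0: "count_list (btilde mu) 0 + iconj mu (length mu + 1) = length mu"
    and block_len_eq_count_list_btilde:
      "1 \<le> k \<Longrightarrow> k \<le> hd mu - length mu \<Longrightarrow> block_len mu L0 k = count_list (btilde mu) k"
proof -
  have iconj: "iconj mu (length mu + k) = conj_part (btilde mu) k" for k
    by (simp add: iconj_def)
  have "conj_part (btilde mu) 0 = length mu"
    by (simp add: conj_part_def)
  then show "count_list (btilde mu) 0 + iconj mu (length mu + 1) = length mu"
    using conj_part_eq_count_list_plus[of "btilde mu" 0] iconj[of 1] by simp
  have top: "conj_part (btilde mu) (Suc (hd mu - length mu)) = 0"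
    using btilde_le_hd[OF assms] by (fastforce simp: conj_part_def filter_empty_conv)
  assume "1 \<le> k" "k \<le> hd mu - length mu"
  then show "block_len mu L0 k = count_list (btilde mu) k"
    using conj_part_eq_count_list_plus[of "btilde mu" k] top iconj[of k] iconj[of "Suc k"]
    by (cases "k = hd mu - length mu") (auto simp: block_len_def Let_def)
qed

lemma map_rev_btilde_grouped:
  assumes "mu \<in> Y0"
  shows "map f (rev (btilde mu)) =
    concat (map (\<lambda>k. replicate (count_list (btilde mu) k) (f k)) [0..<Suc (hd mu - length mu)])"
proof -
  have "set (rev (btilde mu)) \<subseteq> {0..<Suc (hd mu - length mu)}"
    using btilde_le_hd[OF assms] by (auto simp: less_Suc_eq_le)
  then have "rev (btilde mu) =
      concat (map (\<lambda>k. replicate (count_list (btilde mu) k) k) [0..<Suc (hd mu - length mu)])"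
    using sorted_eq_concat_replicate_count_list[OF sorted_rev_btilde[OF assms]] by simp
  then show ?thesis
    by (simp add: map_concat comp_def)
qed

lemma signature_eq_blocks:
  assumes "mu \<in> Y0" and "i \<le> 1"
  defines "n \<equiv> length mu"
  defines "L0 \<equiv> if n mod 2 = i then n + 1 - iconj mu (n + 1) else n - iconj mu (n + 1)"
  shows "signature 0 i mu = blocks mu L0 (n mod 2 = i)"
proof -
  define B where "B = btilde mu"
  define K where "K = hd mu - n"
  define sg where "sg = (\<lambda>x. if (x + n) mod 2 = i then Plus else Minus)"
  define block where "block = (\<lambda>k. replicate (block_len mu L0 k) (sg k))"
  have "map sg (rev B) = concat (map (\<lambda>k. replicate (count_list B k) (sg k)) [0..<Suc K])"
    using map_rev_btilde_grouped[OF assms(1)] by (simp add: B_def K_def n_def)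
  also have "\<dots> = replicate (count_list B 0) (sg 0) @ concat (map block [1..<Suc K])"
  proof -
    have "map (\<lambda>k. replicate (count_list B k) (sg k)) [1..<Suc K] = map block [1..<Suc K]"
      using block_len_eq_count_list_btilde[OF assms(1)] by (auto simp: block_def B_def K_def n_def)
    moreover have "[0..<Suc K] = 0 # [1..<Suc K]"
      by (simp add: upt_conv_Cons)
    ultimately show ?thesis
      by (simp only: list.map concat.simps)
  qed
  finally have "signature 0 i mu
      = ((if n mod 2 = i then [Plus] else []) @ replicate (count_list B 0) (sg 0))
        @ concat (map block [1..<Suc K])"
    using signature_eq_map_btilde[OF assms(1,2)] by (simp add: sg_def B_def n_def)
  also have "(if n mod 2 = i then [Plus] else []) @ replicate (count_list B 0) (sg 0) = block 0"
  proof -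
    have "count_list B 0 + iconj mu (n + 1) = n"
      using count_list_btilde_0[OF assms(1)] by (simp add: B_def n_def)
    then have "block_len mu L0 0 = (if n mod 2 = i then Suc (count_list B 0) else count_list B 0)"
      by (auto simp: block_len_def L0_def)
    then show ?thesis
      by (simp add: block_def sg_def)
  qed
  also have "block 0 @ concat (map block [1..<Suc K]) = concat (map block [0..<Suc K])"
    by (simp add: upt_conv_Cons del: upt_Suc)
  also have "\<dots> = blocks mu L0 (n mod 2 = i)"
  proof -
    have "even k = (n mod 2 = i) \<longleftrightarrow> (k + n) mod 2 = i" for k
      using assms(2) by presburger
    then show ?thesis
      by (simp add: blocks_def block_def sg_def K_def n_def)
  qed
  finally show ?thesis .
qed

theorem mainTheorem9:
  fixes mu :: "nat list" and m n :: nat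
  assumes "mu \<in> Y0" and "m = hd mu" and "n = length mu" and "m > n"
  shows
   "((even m \<and> even n) \<longrightarrow> signature 0 0 mu = blocks mu (n + 1 - iconj mu (n + 1)) True) \<and>
    ((odd m \<and> odd n) \<longrightarrow> signature 0 1 mu = blocks mu (n + 1 - iconj mu (n + 1)) True) \<and>
    ((even m \<and> odd n) \<longrightarrow> signature 0 0 mu = blocks mu (n - iconj mu (n + 1)) False) \<and>
    ((odd m \<and> even n) \<longrightarrow> signature 0 1 mu = blocks mu (n - iconj mu (n + 1)) False) \<and>
    ((odd m \<and> even n) \<longrightarrow> signature 0 0 mu = blocks mu (n + 1 - iconj mu (n + 1)) True) \<and>
    ((even m \<and> odd n) \<longrightarrow> signature 0 1 mu = blocks mu (n + 1 - iconj mu (n + 1)) True) \<and>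
    ((odd m \<and> odd n) \<longrightarrow> signature 0 0 mu = blocks mu (n - iconj mu (n + 1)) False) \<and>
    ((even m \<and> even n) \<longrightarrow> signature 0 1 mu = blocks mu (n - iconj mu (n + 1)) False)"
proof -
  note sig0 = signature_eq_blocks[OF assms(1), of 0, folded assms(3)]
  note sig1 = signature_eq_blocks[OF assms(1), of 1, folded assms(3)]
  show ?thesis
  proof (cases "even n")
    case True
    then have "n mod 2 = 0"
      by presburger
    with True sig0 sig1 show ?thesis
      by simp
  next
    case False
    then have "n mod 2 = 1"
      by presburger
    with False sig0 sig1 show ?thesis
      by simp
  qed
qed

end
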